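(* Let $v,j,n$ be positive integers, $\mathcal{V}=\{1,\dots,v\}$, $\mathcal{X}=2^{\mathcal{V}}$, $\mathcal{Y}=\binom{\mathcal{V}}{j}\times\{0,1\}^j$, $p$ a probability distribution on $\mathcal{X}$ and $u:\mathcal{X}\times2^{\mathcal{X}}\to\mathbb{R}^+$ semantic weights. For reports $X^n=(X(1),\dots,X(n))$ i.i.d. with law $p$, the minimum, over all summarizers $s\in\mathcal{P}(\mathcal{Y}|\mathcal{X}^n)$ of length $j$ (with $Y\sim s_{X^n}(y)$), of the semantic loss $\ell(X(1);Y\mid u)$ equals $$\sum_{x\in\mathcal{X}}p(x)\min_{y\in\mathcal{Y}}\sum_{\mathcal{W}\subseteq\mathcal{X}}u(x,\mathcal{W})\bigl(1-i_y(\mathcal{W})\bigr),$$ where $i_y(\mathcal{W})=\sum_{x\in\mathcal{W}}i_y(x)$.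
   Context: Reports are elements $x\in\mathcal{X}=2^{\mathcal{V}}$, equivalently binary vectors $(x_1,\dots,x_v)$. A summary is $y=(\hat y,\tilde y)$ with $\hat y\subseteq\mathcal{V}$, $|\hat y|=j$, and $\tilde y\in\{0,1\}^j$; write $y\subset x$ if $\tilde y$ equals the restriction of $x$ to the coordinates in $\hat y$. Let $\mathcal{X}(y)=\{x\in\mathcal{X}: y\subset x\}$ and $p(A)=\sum_{a\in A}p(a)$. The summary interpretation is $i_y(x)=1_{\mathcal{X}(y)}(x)\,p(x)/p(\mathcal{X}(y))$. Semantic weights are any $u:\mathcal{X}\times2^{\mathcal{X}}\to\mathbb{R}^+$ with $u(x,\mathcal{W})=0$ whenever $x\notin\mathcal{W}$. A summarizer of length $j$ is a conditional distribution $s\in\mathcal{P}(\mathcal{Y}|\mathcal{X}^n)$, producing $Y\sim s_{X^n}(y)$. For $\mathcal{W}\subseteq\mathcal{X}$, $\mathcal{P}(\mathcal{W}|\mathcal{X})$ is the set of conditional distributions on $\mathcal{X}$ given an element of $\mathcal{X}$ supported on $\mathcal{W}$. The semantic loss is $$\ell(X;Y\mid u)=\mathbb{E}\Bigl[\sum_{\mathcal{W}\subseteq\mathcal{X}}\inf_{q\in\mathcal{P}(\mathcal{W}|\mathcal{X})} u(X,\mathcal{W})\sum_{x\in\mathcal{X}}\tfrac12\bigl|q_X(x)-i_Y(x)\bigr|\Bigr].$$ *)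

theory Defs
  imports Complex_Main "HOL-Library.FuncSet"
begin

definition reports :: "nat \<Rightarrow> nat set set" where
  "reports v = Pow {1..v}"

(* Summaries y = (yhat, ytilde): yhat a j-subset of V, ytilde \<in> {0,1}^yhat,
   encoded as a function yhat \<Rightarrow> bool (extensional, undefined off yhat). *)
definition summaries :: "nat \<Rightarrow> nat \<Rightarrow> (nat set \<times> (nat \<Rightarrow> bool)) set" where
  "summaries v j = {(S, b). S \<subseteq> {1..v} \<and> card S = j \<and> b \<in> extensional S}"

definition sub_of :: "nat set \<times> (nat \<Rightarrow> bool) \<Rightarrow> nat set \<Rightarrow> bool" where
  "sub_of y x = (\<forall>k\<in>fst y. snd y k = (k \<in> x))"

definition cyl :: "nat \<Rightarrow> nat set \<times> (nat \<Rightarrow> bool) \<Rightarrow> nat set set" where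
  "cyl v y = {x \<in> reports v. sub_of y x}"

definition interp :: "nat \<Rightarrow> (nat set \<Rightarrow> real) \<Rightarrow> nat set \<times> (nat \<Rightarrow> bool) \<Rightarrow> nat set \<Rightarrow> real" where
  "interp v p y x = (if x \<in> cyl v y then p x / (\<Sum>a\<in>cyl v y. p a) else 0)"

definition interp_set :: "nat \<Rightarrow> (nat set \<Rightarrow> real) \<Rightarrow> nat set \<times> (nat \<Rightarrow> bool) \<Rightarrow> nat set set \<Rightarrow> real" where
  "interp_set v p y W = (\<Sum>x\<in>W. interp v p y x)"

definition is_distr :: "'a set \<Rightarrow> ('a \<Rightarrow> real) \<Rightarrow> bool" where
  "is_distr A f \<longleftrightarrow> (\<forall>a\<in>A. f a \<ge> 0) \<and> (\<Sum>a\<in>A. f a) = 1"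

definition sem_weights :: "nat \<Rightarrow> (nat set \<Rightarrow> nat set set \<Rightarrow> real) \<Rightarrow> bool" where
  "sem_weights v u \<longleftrightarrow> (\<forall>x\<in>reports v. \<forall>W\<in>Pow (reports v).
       u x W \<ge> 0 \<and> (x \<notin> W \<longrightarrow> u x W = 0))"

definition cond_distrs :: "nat \<Rightarrow> nat set set \<Rightarrow> (nat set \<Rightarrow> nat set \<Rightarrow> real) set" where
  "cond_distrs v W = {q. \<forall>x0\<in>reports v. is_distr (reports v) (q x0) \<and>
                          (\<forall>x\<in>reports v - W. q x0 x = 0)}"

(* Inner term for realisation X = x and Y = y.  The term for W = {} is omitted:
   there u(x,{}) = 0 and P({}|X) is empty (0 * inf {} taken as 0). *)
definition sem_term :: "nat \<Rightarrow> (nat set \<Rightarrow> real) \<Rightarrow> (nat set \<Rightarrow> nat set set \<Rightarrow> real)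
    \<Rightarrow> nat set \<Rightarrow> nat set \<times> (nat \<Rightarrow> bool) \<Rightarrow> real" where
  "sem_term v p u x y = (\<Sum>W\<in>Pow (reports v) - {{}}.
      Inf {u x W * (\<Sum>x'\<in>reports v. \<bar>q x x' - interp v p y x'\<bar> / 2) | q. q \<in> cond_distrs v W})"

(* X^n as lists of length n; report X(1) is xs ! 0 *)
definition report_seqs :: "nat \<Rightarrow> nat \<Rightarrow> nat set list set" where
  "report_seqs v n = {xs. length xs = n \<and> set xs \<subseteq> reports v}"

definition summarizers :: "nat \<Rightarrow> nat \<Rightarrow> nat \<Rightarrow> (nat set list \<Rightarrow> nat set \<times> (nat \<Rightarrow> bool) \<Rightarrow> real) set" where
  "summarizers v j n = {s. \<forall>xs\<in>report_seqs v n. is_distr (summaries v j) (s xs)}"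

definition sem_loss :: "nat \<Rightarrow> nat \<Rightarrow> nat \<Rightarrow> (nat set \<Rightarrow> real) \<Rightarrow> (nat set \<Rightarrow> nat set set \<Rightarrow> real)
    \<Rightarrow> (nat set list \<Rightarrow> nat set \<times> (nat \<Rightarrow> bool) \<Rightarrow> real) \<Rightarrow> real" where
  "sem_loss v j n p u s = (\<Sum>xs\<in>report_seqs v n. (\<Prod>i<n. p (xs ! i)) *
       (\<Sum>y\<in>summaries v j. s xs y * sem_term v p u (xs ! 0) y))"

end

theory Submission
  imports Defs
begin

text \<open>
  For a report \<open>x\<close> and a nonempty \<open>W\<close>, the distributions supported on \<open>W\<close> are at total
  variation distance at least \<open>1 - i\<^sub>y(W)\<close> from \<open>i\<^sub>y\<close>, and this is attained by keeping \<open>i\<^sub>y\<close> on \<open>W\<close>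
  and putting the missing mass on a single point of \<open>W\<close>.  Hence the loss is the average of the
  cost \<open>\<Sum>\<^sub>W u(x,W)(1 - i\<^sub>y(W))\<close>, which depends on \<open>X(1)\<close> and \<open>Y\<close> only.  An average over \<open>Y\<close> is at
  least the minimum over \<open>Y\<close>, and the summarizer that deterministically outputs a minimiser for
  \<open>X(1)\<close> attains it; the remaining reports integrate out to total mass \<open>1\<close>.
\<close>

lemma finite_reports [simp]: "finite (reports v)"
  by (simp add: reports_def)

lemma sum_abs_diff_ge_mass_outside:
  fixes q i :: "'a \<Rightarrow> real"
  assumes "finite A" "W \<subseteq> A"
    and q_sum: "(\<Sum>x\<in>A. q x) = 1" and q_zero: "\<forall>x\<in>A - W. q x = 0"
    and i: "is_distr A i"
  shows "2 * (1 - sum i W) \<le> (\<Sum>x\<in>A. \<bar>q x - i x\<bar>)"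
proof -
  note split = sum.subset_diff[OF assms(2,1)]
  have outside: "(\<Sum>x\<in>A - W. \<bar>q x - i x\<bar>) = 1 - sum i W"
  proof -
    have "(\<Sum>x\<in>A - W. \<bar>q x - i x\<bar>) = (\<Sum>x\<in>A - W. i x)"
      using q_zero i by (intro sum.cong) (auto simp: is_distr_def)
    then show ?thesis using split[of i] i by (simp add: is_distr_def)
  qed
  have "1 - sum i W = (\<Sum>x\<in>W. q x - i x)"
    using split[of q] q_sum q_zero by (simp add: sum_subtractf)
  also have "\<dots> \<le> (\<Sum>x\<in>W. \<bar>q x - i x\<bar>)"
    by (rule order_trans[OF abs_ge_self sum_abs])
  finally show ?thesis using split[of "\<lambda>x. \<bar>q x - i x\<bar>"] outside by simp
qed

lemma exists_distr_on_abs_diff_eq_mass_outside: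
  fixes i :: "'a \<Rightarrow> real"
  assumes "finite A" "W \<subseteq> A" "W \<noteq> {}" and i: "is_distr A i"
  obtains q where "is_distr A q" "\<forall>x\<in>A - W. q x = 0"
    "(\<Sum>x\<in>A. \<bar>q x - i x\<bar>) = 2 * (1 - sum i W)"
proof -
  obtain w where w: "w \<in> W" using assms(3) by blast
  define r where "r = 1 - sum i W"
  define q where "q x = (if x \<in> W then i x else 0) + (if x = w then r else 0)" for x
  note split = sum.subset_diff[OF assms(2,1)]
  have "sum i W \<le> 1"
    using split[of i] i sum_nonneg[of "A - W" i] by (auto simp: is_distr_def)
  then have "r \<ge> 0" by (simp add: r_def)
  have "finite W" using assms(1,2) finite_subset by blast
  have q_sum: "(\<Sum>x\<in>A. q x) = 1"
    using \<open>finite W\<close> assms(1,2) w subsetD[OF assms(2) w]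
    by (simp add: q_def sum.distrib sum.inter_restrict[symmetric] Int_absorb1 r_def)
  have "is_distr A q"
    using i \<open>r \<ge> 0\<close> q_sum by (auto simp: is_distr_def q_def)
  moreover have "\<forall>x\<in>A - W. q x = 0" using w by (simp add: q_def)
  moreover have "(\<Sum>x\<in>A. \<bar>q x - i x\<bar>) = 2 * r"
  proof -
    have "(\<Sum>x\<in>W. \<bar>q x - i x\<bar>) = (\<Sum>x\<in>W. if x = w then r else 0)"
      using \<open>r \<ge> 0\<close> by (intro sum.cong) (auto simp: q_def)
    moreover have "(\<Sum>x\<in>A - W. \<bar>q x - i x\<bar>) = (\<Sum>x\<in>A - W. i x)"
      using i w by (intro sum.cong) (auto simp: q_def is_distr_def)
    ultimately show ?thesis
      using split[of "\<lambda>x. \<bar>q x - i x\<bar>"] split[of i] i \<open>finite W\<close> w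
      by (simp add: is_distr_def r_def)
  qed
  ultimately show thesis using that r_def by blast
qed

lemma Inf_tv_cond_distrs:
  assumes i: "is_distr (reports v) i" and W: "W \<subseteq> reports v" "W \<noteq> {}"
    and x: "x \<in> reports v" and "c \<ge> 0"
  shows "Inf {c * (\<Sum>x'\<in>reports v. \<bar>q x x' - i x'\<bar> / 2) | q. q \<in> cond_distrs v W}
    = c * (1 - sum i W)"
proof (rule cInf_eq_minimum)
  obtain q where q: "is_distr (reports v) q" "\<forall>x\<in>reports v - W. q x = 0"
    "(\<Sum>x\<in>reports v. \<bar>q x - i x\<bar>) = 2 * (1 - sum i W)"
    using exists_distr_on_abs_diff_eq_mass_outside[OF finite_reports W i] by blast
  have "(\<lambda>_. q) \<in> cond_distrs v W" using q(1,2) by (simp add: cond_distrs_def)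
  moreover have "c * (1 - sum i W) = c * (\<Sum>x'\<in>reports v. \<bar>q x' - i x'\<bar> / 2)"
    using q(3) by (simp add: sum_divide_distrib[symmetric])
  ultimately show "c * (1 - sum i W) \<in>
      {c * (\<Sum>x'\<in>reports v. \<bar>q x x' - i x'\<bar> / 2) | q. q \<in> cond_distrs v W}"
    by force
next
  fix z assume "z \<in> {c * (\<Sum>x'\<in>reports v. \<bar>q x x' - i x'\<bar> / 2) | q. q \<in> cond_distrs v W}"
  then obtain q where z: "z = c * (\<Sum>x'\<in>reports v. \<bar>q x x' - i x'\<bar> / 2)"
    and q: "q \<in> cond_distrs v W" by blast
  have "2 * (1 - sum i W) \<le> (\<Sum>x'\<in>reports v. \<bar>q x x' - i x'\<bar>)"
    using q x W(1) i
    by (intro sum_abs_diff_ge_mass_outside) (auto simp: cond_distrs_def is_distr_def)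
  then show "c * (1 - sum i W) \<le> z"
    unfolding z using \<open>c \<ge> 0\<close> by (intro mult_left_mono) (simp_all add: sum_divide_distrib[symmetric])
qed

lemma is_distr_interp:
  assumes "is_distr (reports v) p" "(\<Sum>a\<in>cyl v y. p a) > 0"
  shows "is_distr (reports v) (interp v p y)"
proof -
  have cyl: "cyl v y \<subseteq> reports v" by (auto simp: cyl_def)
  have "(\<Sum>x\<in>reports v. interp v p y x) = (\<Sum>x\<in>cyl v y. p x / (\<Sum>a\<in>cyl v y. p a))"
    unfolding interp_def
    by (rule sum.mono_neutral_cong_right[OF finite_reports cyl]) auto
  also have "\<dots> = 1" using assms(2) by (simp add: sum_divide_distrib[symmetric])
  finally show ?thesis
    using assms cyl by (auto simp: is_distr_def interp_def)
qed

definition summary_cost ::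
    "nat \<Rightarrow> (nat set \<Rightarrow> real) \<Rightarrow> (nat set \<Rightarrow> nat set set \<Rightarrow> real) \<Rightarrow> nat set
      \<Rightarrow> nat set \<times> (nat \<Rightarrow> bool) \<Rightarrow> real" where
  "summary_cost v p u x y = (\<Sum>W\<in>Pow (reports v). u x W * (1 - interp_set v p y W))"

lemma sem_term_eq_summary_cost:
  assumes "is_distr (reports v) p" "(\<Sum>a\<in>cyl v y. p a) > 0" "sem_weights v u"
    and x: "x \<in> reports v"
  shows "sem_term v p u x y = summary_cost v p u x y"
proof -
  have "sem_term v p u x y = (\<Sum>W\<in>Pow (reports v) - {{}}. u x W * (1 - interp_set v p y W))"
    unfolding sem_term_def interp_set_def
    using assms x
    by (intro sum.cong refl Inf_tv_cond_distrs is_distr_interp) (auto simp: sem_weights_def)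
  also have "\<dots> = summary_cost v p u x y"
  proof -
    have "u x {} = 0" using assms(3) x by (simp add: sem_weights_def)
    then show ?thesis
      unfolding summary_cost_def by (simp add: sum.remove[of "Pow (reports v)" "{}"])
  qed
  finally show ?thesis .
qed

lemma sum_prod_nth_lists_length_Suc:
  fixes p :: "'a \<Rightarrow> real"
  shows "(\<Sum>xs\<in>{xs. set xs \<subseteq> A \<and> length xs = Suc m}. (\<Prod>k<Suc m. p (xs ! k)) * g (xs ! 0))
    = (\<Sum>x\<in>A. p x * g x) * (\<Sum>xs\<in>{xs. set xs \<subseteq> A \<and> length xs = m}. \<Prod>k<m. p (xs ! k))"
  (is "?lhs = _ * (\<Sum>ys\<in>?L. ?P ys)")
proof -
  have "?lhs = (\<Sum>(ys, x)\<in>?L \<times> A. (\<Prod>k<Suc m. p ((x # ys) ! k)) * g x)"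
    unfolding lists_length_Suc_eq sum.reindex[OF inj_split_Cons]
    by (intro sum.cong refl) (simp add: split_beta del: prod.lessThan_Suc)
  also have "\<dots> = (\<Sum>(ys, x)\<in>?L \<times> A. (p x * g x) * ?P ys)"
    by (intro sum.cong refl) (auto simp: prod.lessThan_Suc_shift mult_ac simp del: prod.lessThan_Suc)
  also have "\<dots> = (\<Sum>ys\<in>?L. \<Sum>x\<in>A. (p x * g x) * ?P ys)"
    by (rule sum.cartesian_product[symmetric])
  finally show ?thesis unfolding sum_product by (rule trans[OF _ sum.swap])
qed

lemma sum_prod_nth_lists_length:
  fixes p :: "'a \<Rightarrow> real"
  shows "(\<Sum>xs\<in>{xs. set xs \<subseteq> A \<and> length xs = m}. \<Prod>k<m. p (xs ! k)) = (\<Sum>x\<in>A. p x) ^ m"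
proof (induction m)
  case 0
  have "{xs. set xs \<subseteq> A \<and> length xs = 0} = {[]}" by auto
  then show ?case by simp
next
  case (Suc m)
  have "(\<Sum>xs\<in>{xs. set xs \<subseteq> A \<and> length xs = Suc m}. \<Prod>k<Suc m. p (xs ! k))
      = (\<Sum>x\<in>A. p x) * (\<Sum>xs\<in>{xs. set xs \<subseteq> A \<and> length xs = m}. \<Prod>k<m. p (xs ! k))"
    using sum_prod_nth_lists_length_Suc[where g = "\<lambda>_. 1"] by simp
  then show ?case using Suc.IH by simp
qed

lemma sum_report_seqs_nth_0:
  fixes p :: "nat set \<Rightarrow> real"
  assumes "(\<Sum>x\<in>reports v. p x) = 1" "0 < n"
  shows "(\<Sum>xs\<in>report_seqs v n. (\<Prod>k<n. p (xs ! k)) * g (xs ! 0)) = (\<Sum>x\<in>reports v. p x * g x)"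
proof -
  obtain m where "n = Suc m" using assms(2) by (cases n) auto
  moreover have "report_seqs v n = {xs. set xs \<subseteq> reports v \<and> length xs = n}"
    by (auto simp: report_seqs_def)
  ultimately show ?thesis
    using sum_prod_nth_lists_length_Suc[where A = "reports v" and m = m and p = p and g = g]
      sum_prod_nth_lists_length[where A = "reports v" and m = m and p = p] assms(1)
    by (simp del: prod.lessThan_Suc)
qed

lemma finite_summaries: "finite (summaries v j)"
proof (rule finite_subset)
  show "summaries v j \<subseteq> Sigma (Pow {1..v}) (\<lambda>S. S \<rightarrow>\<^sub>E (UNIV :: bool set))"
    by (auto simp: summaries_def PiE_def)
  show "finite (Sigma (Pow {1..v}) (\<lambda>S. S \<rightarrow>\<^sub>E (UNIV :: bool set)))"
    by (intro finite_SigmaI finite_PiE) (auto dest: finite_subset[OF _ finite_atLeastAtMost])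
qed

lemma summaries_nonempty: "j \<le> v \<Longrightarrow> summaries v j \<noteq> {}"
proof -
  assume "j \<le> v"
  then have "({1..j}, restrict (\<lambda>_. True) {1..j}) \<in> summaries v j"
    by (auto simp: summaries_def)
  then show ?thesis by blast
qed

lemma Min_le_sum_distr:
  fixes F :: "'a \<Rightarrow> real"
  assumes "finite Y" and s: "is_distr Y s"
  shows "Min (F ` Y) \<le> (\<Sum>y\<in>Y. s y * F y)"
proof -
  have "Min (F ` Y) = (\<Sum>y\<in>Y. s y * Min (F ` Y))"
    using s by (simp add: is_distr_def sum_distrib_right[symmetric])
  also have "\<dots> \<le> (\<Sum>y\<in>Y. s y * F y)"
    using s \<open>finite Y\<close> by (intro sum_mono mult_left_mono Min_le) (auto simp: is_distr_def)
  finally show ?thesis .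
qed

lemma Min_image_arg_min_on:
  fixes F :: "'a \<Rightarrow> 'b :: linorder"
  assumes "finite Y" "Y \<noteq> {}"
  shows "Min (F ` Y) = F (arg_min_on F Y)"
  using assms by (intro Min_eqI) (auto intro: arg_min_least arg_min_if_finite(1))

lemma sem_loss_eq_summary_cost:
  assumes "0 < n" "is_distr (reports v) p" "\<forall>y\<in>summaries v j. (\<Sum>a\<in>cyl v y. p a) > 0"
    and "sem_weights v u"
  shows "sem_loss v j n p u s = (\<Sum>xs\<in>report_seqs v n. (\<Prod>k<n. p (xs ! k)) *
           (\<Sum>y\<in>summaries v j. s xs y * summary_cost v p u (xs ! 0) y))"
proof -
  have "xs ! 0 \<in> reports v" if "xs \<in> report_seqs v n" for xs
    using that \<open>0 < n\<close> nth_mem[of 0 xs] by (auto simp: report_seqs_def)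
  then show ?thesis
    unfolding sem_loss_def using assms(2-4)
    by (intro sum.cong refl arg_cong2[where f = "(*)"] sem_term_eq_summary_cost) auto
qed

lemma sem_loss_ge_expected_min_cost:
  assumes "0 < n" and p: "is_distr (reports v) p"
    and "\<forall>y\<in>summaries v j. (\<Sum>a\<in>cyl v y. p a) > 0" "sem_weights v u"
    and s: "s \<in> summarizers v j n"
  shows "(\<Sum>x\<in>reports v. p x * Min (summary_cost v p u x ` summaries v j)) \<le> sem_loss v j n p u s"
proof -
  have "(\<Sum>x\<in>reports v. p x * Min (summary_cost v p u x ` summaries v j))
      = (\<Sum>xs\<in>report_seqs v n. (\<Prod>k<n. p (xs ! k)) * Min (summary_cost v p u (xs ! 0) ` summaries v j))"
    using p \<open>0 < n\<close>
    by (simp add: is_distr_def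
        sum_report_seqs_nth_0[where g = "\<lambda>x. Min (summary_cost v p u x ` summaries v j)"])
  also have "\<dots> \<le> (\<Sum>xs\<in>report_seqs v n. (\<Prod>k<n. p (xs ! k)) *
      (\<Sum>y\<in>summaries v j. s xs y * summary_cost v p u (xs ! 0) y))"
  proof (intro sum_mono mult_left_mono prod_nonneg)
    fix xs assume xs: "xs \<in> report_seqs v n"
    then show "Min (summary_cost v p u (xs ! 0) ` summaries v j)
        \<le> (\<Sum>y\<in>summaries v j. s xs y * summary_cost v p u (xs ! 0) y)"
      using s by (intro Min_le_sum_distr finite_summaries) (simp add: summarizers_def)
    fix k assume "k \<in> {..<n}"
    then show "0 \<le> p (xs ! k)"
      using xs p nth_mem[of k xs] by (auto simp: report_seqs_def is_distr_def subset_iff)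
  qed
  also have "\<dots> = sem_loss v j n p u s"
    using assms by (simp add: sem_loss_eq_summary_cost)
  finally show ?thesis .
qed

definition argmin_summarizer ::
    "nat \<Rightarrow> nat \<Rightarrow> (nat set \<Rightarrow> real) \<Rightarrow> (nat set \<Rightarrow> nat set set \<Rightarrow> real)
      \<Rightarrow> nat set list \<Rightarrow> nat set \<times> (nat \<Rightarrow> bool) \<Rightarrow> real" where
  "argmin_summarizer v j p u xs y =
     of_bool (y = arg_min_on (summary_cost v p u (xs ! 0)) (summaries v j))"

lemma sum_argmin_summarizer:
  assumes "j \<le> v"
  shows "(\<Sum>y\<in>summaries v j. argmin_summarizer v j p u xs y * g y)
    = g (arg_min_on (summary_cost v p u (xs ! 0)) (summaries v j))"
  using arg_min_if_finite(1)[OF finite_summaries summaries_nonempty[OF assms],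
      of "summary_cost v p u (xs ! 0)"]
  by (simp add: argmin_summarizer_def finite_summaries Int_insert_right)

lemma argmin_summarizer_in_summarizers:
  "j \<le> v \<Longrightarrow> argmin_summarizer v j p u \<in> summarizers v j n"
  using sum_argmin_summarizer[where g = "\<lambda>_. 1"]
  by (simp add: summarizers_def is_distr_def argmin_summarizer_def)

lemma sem_loss_argmin_summarizer:
  assumes "0 < n" "j \<le> v" "is_distr (reports v) p"
    and "\<forall>y\<in>summaries v j. (\<Sum>a\<in>cyl v y. p a) > 0" "sem_weights v u"
  shows "sem_loss v j n p u (argmin_summarizer v j p u)
    = (\<Sum>x\<in>reports v. p x * Min (summary_cost v p u x ` summaries v j))"
proof -
  let ?min_cost = "\<lambda>x. summary_cost v p u x (arg_min_on (summary_cost v p u x) (summaries v j))"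
  have "sem_loss v j n p u (argmin_summarizer v j p u)
      = (\<Sum>xs\<in>report_seqs v n. (\<Prod>k<n. p (xs ! k)) * ?min_cost (xs ! 0))"
    using assms by (simp add: sem_loss_eq_summary_cost sum_argmin_summarizer)
  also have "\<dots> = (\<Sum>x\<in>reports v. p x * ?min_cost x)"
    using assms by (intro sum_report_seqs_nth_0) (simp_all add: is_distr_def)
  finally show ?thesis
    by (simp add: Min_image_arg_min_on finite_summaries summaries_nonempty \<open>j \<le> v\<close>)
qed

theorem corollary1:
  fixes v j n :: nat and p :: "nat set \<Rightarrow> real" and u :: "nat set \<Rightarrow> nat set set \<Rightarrow> real"
  assumes "0 < v" "0 < j" "0 < n" "j \<le> v"
    and "is_distr (reports v) p"
    and "\<forall>y\<in>summaries v j. (\<Sum>a\<in>cyl v y. p a) > 0"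
    and "sem_weights v u"
  shows "(\<exists>s\<in>summarizers v j n. sem_loss v j n p u s =
            (\<Sum>x\<in>reports v. p x * Min ((\<lambda>y. \<Sum>W\<in>Pow (reports v). u x W * (1 - interp_set v p y W)) ` summaries v j)))
       \<and> (\<forall>s\<in>summarizers v j n. sem_loss v j n p u s \<ge>
            (\<Sum>x\<in>reports v. p x * Min ((\<lambda>y. \<Sum>W\<in>Pow (reports v). u x W * (1 - interp_set v p y W)) ` summaries v j)))"
  using argmin_summarizer_in_summarizers[OF \<open>j \<le> v\<close>]
    sem_loss_argmin_summarizer[OF assms(3-7)] sem_loss_ge_expected_min_cost[OF assms(3,5-7)]
  unfolding summary_cost_def[abs_def] by blast

end
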